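(* Let $m\ge2$, $n\ge1$ with $m(n-1)$ even, let $\mathcal{H}$ be the real $m^{\rm th}$-order $n$-dimensional Hankel tensor generated by ${\bf h}\in\mathbb{R}^{m(n-1)+1}$, and let $H$ be its associated Hankel matrix. Define the positive constant $c$ (depending on $m,n$) by $c=\min_{0\ne{\bf y}\in\mathbb{R}^n}\|{\bf y}^{\ast\frac m2}\|_2^2/\|{\bf y}\|_m^m$ if $m$ is even, and $c=\min_{0\ne{\bf y}\in\mathbb{R}^n}\|{\bf y}^{\ast\frac{m-1}2}\|_2^2/\|{\bf y}\|_{m-1}^{m-1}$ if $m$ is odd. If $H$ is positive semi-definite, then every H-eigenvalue $\lambda$ of $\mathcal{H}$ satisfies $\lambda\ge c\,\lambda_{\min}(H)$ (i.e. $\lambda_{\min}(\mathcal{H})\ge c\,\lambda_{\min}(H)$). If $H$ is negative semi-definite, then every H-eigenvalue $\lambda$ of $\mathcal{H}$ satisfies $\lambda\le c\,\lambda_{\max}(H)$ (i.e. $\lambda_{\max}(\mathcal{H})\le c\,\lambda_{\max}(H)$).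
   Context: The Hankel tensor generated by ${\bf h}=(h_0,\dots,h_{m(n-1)})$ has entries $\mathcal{H}_{i_1\dots i_m}=h_{i_1+\dots+i_m}$, $0\le i_j\le n-1$; its associated Hankel matrix is $H$ with $H_{ij}=h_{i+j}$, $0\le i,j\le m(n-1)/2$; $\lambda_{\min}(H),\lambda_{\max}(H)$ are its extreme eigenvalues. Convolution: for ${\bf u}\in\mathbb{R}^{n_1},{\bf v}\in\mathbb{R}^{n_2}$ (indexed from $0$), $({\bf u}\ast{\bf v})_j=\sum_{i=0}^j u_iv_{j-i}$ with out-of-range entries zero, and ${\bf y}^{\ast p}$ is the $p$-fold convolution of ${\bf y}$ with itself. A real $\lambda$ is an H-eigenvalue of $\mathcal{H}$ if there is nonzero ${\bf x}\in\mathbb{R}^n$ with $\mathcal{H}{\bf x}^{m-1}=\lambda{\bf x}^{[m-1]}$, where $(\mathcal{H}{\bf x}^{m-1})_i=\sum_{i_2,\dots,i_m}\mathcal{H}_{ii_2\dots i_m}x_{i_2}\cdots x_{i_m}$ and ${\bf x}^{[m-1]}=(x_i^{m-1})_i$; $\lambda_{\min}(\mathcal{H}),\lambda_{\max}(\mathcal{H})$ are the smallest and largest H-eigenvalues (when they exist). $\|\cdot\|_p$ is the $\ell_p$-norm. *)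

theory Defs
  imports Complex_Main "HOL-Library.FuncSet"
begin

text \<open>Vectors in R^n are functions nat => real; only indices 0..n-1 matter.
  The Hankel tensor of order m, dimension n, generated by h has entries
  h (i_1 + ... + i_m), 0 <= i_j <= n-1.\<close>

definition hankel_tensor_apply ::
  "nat \<Rightarrow> nat \<Rightarrow> (nat \<Rightarrow> real) \<Rightarrow> (nat \<Rightarrow> real) \<Rightarrow> nat \<Rightarrow> real" where
  "hankel_tensor_apply m n h x i =
     (\<Sum>f \<in> Pi\<^sub>E {..<m-1} (\<lambda>_. {..<n}).
        h (i + (\<Sum>j<m-1. f j)) * (\<Prod>j<m-1. x (f j)))"

definition is_H_eigenvalue ::
  "nat \<Rightarrow> nat \<Rightarrow> (nat \<Rightarrow> real) \<Rightarrow> real \<Rightarrow> bool" where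
  "is_H_eigenvalue m n h lam \<longleftrightarrow>
     (\<exists>x::nat \<Rightarrow> real. (\<exists>i<n. x i \<noteq> 0) \<and>
        (\<forall>i<n. hankel_tensor_apply m n h x i = lam * x i ^ (m-1)))"

text \<open>Associated Hankel matrix: indices 0..N with N = m(n-1)/2, entries h(i+j).\<close>

definition hankel_matrix :: "(nat \<Rightarrow> real) \<Rightarrow> nat \<Rightarrow> nat \<Rightarrow> real" where
  "hankel_matrix h i j = h (i + j)"

definition mat_psd :: "nat \<Rightarrow> (nat \<Rightarrow> nat \<Rightarrow> real) \<Rightarrow> bool" where
  "mat_psd N A \<longleftrightarrow> (\<forall>v::nat \<Rightarrow> real. (\<Sum>i\<le>N. \<Sum>j\<le>N. v i * A i j * v j) \<ge> 0)"

definition mat_nsd :: "nat \<Rightarrow> (nat \<Rightarrow> nat \<Rightarrow> real) \<Rightarrow> bool" where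
  "mat_nsd N A \<longleftrightarrow> (\<forall>v::nat \<Rightarrow> real. (\<Sum>i\<le>N. \<Sum>j\<le>N. v i * A i j * v j) \<le> 0)"

definition mat_eigenvalues :: "nat \<Rightarrow> (nat \<Rightarrow> nat \<Rightarrow> real) \<Rightarrow> real set" where
  "mat_eigenvalues N A = {\<mu>. \<exists>v::nat \<Rightarrow> real. (\<exists>i\<le>N. v i \<noteq> 0) \<and>
        (\<forall>i\<le>N. (\<Sum>j\<le>N. A i j * v j) = \<mu> * v i)}"

definition lambda_min :: "nat \<Rightarrow> (nat \<Rightarrow> nat \<Rightarrow> real) \<Rightarrow> real" where
  "lambda_min N A = Min (mat_eigenvalues N A)"

definition lambda_max :: "nat \<Rightarrow> (nat \<Rightarrow> nat \<Rightarrow> real) \<Rightarrow> real" where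
  "lambda_max N A = Max (mat_eigenvalues N A)"

definition conv :: "(nat \<Rightarrow> real) \<Rightarrow> (nat \<Rightarrow> real) \<Rightarrow> nat \<Rightarrow> real" where
  "conv u v j = (\<Sum>i\<le>j. u i * v (j - i))"

fun conv_pow :: "(nat \<Rightarrow> real) \<Rightarrow> nat \<Rightarrow> nat \<Rightarrow> real" where
  "conv_pow y 0 = (\<lambda>j. if j = 0 then 1 else 0)"
| "conv_pow y (Suc 0) = y"
| "conv_pow y (Suc (Suc p)) = conv y (conv_pow y (Suc p))"

definition vec_n :: "nat \<Rightarrow> (nat \<Rightarrow> real) set" where
  "vec_n n = {y. \<forall>i\<ge>n. y i = 0}"

definition conv_ratio :: "nat \<Rightarrow> nat \<Rightarrow> nat \<Rightarrow> (nat \<Rightarrow> real) \<Rightarrow> real" where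
  "conv_ratio n p q y =
     (\<Sum>j\<le>p*(n-1). (conv_pow y p j)\<^sup>2) / (\<Sum>i<n. \<bar>y i\<bar> ^ q)"

definition const_c :: "nat \<Rightarrow> nat \<Rightarrow> real" where
  "const_c m n =
     (if even m
      then Inf {conv_ratio n (m div 2) m y | y. y \<in> vec_n n \<and> (\<exists>i<n. y i \<noteq> 0)}
      else Inf {conv_ratio n ((m-1) div 2) (m-1) y | y. y \<in> vec_n n \<and> (\<exists>i<n. y i \<noteq> 0)})"

end

theory Submission
  imports Defs "HOL-Analysis.Analysis" "Jordan_Normal_Form.Char_Poly"
begin

text \<open>
  For even m = 2p, contracting the eigen-equation with x turns its left-hand side into the Hankel
  form z' H z of z = x^{*p}: a Hankel tensor only sees index sums, and summing a product over index
  tuples with prescribed sum is convolution. Hence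
  lambda ||x||_m^m = z' H z >= lambda_min(H) ||z||_2^2 >= c lambda_min(H) ||x||_m^m.
  For odd m = 2p + 1, entry k1 + k2 of the eigen-equation is the form of H on the shifted vectors
  S^k1 z and S^k2 z, so the same estimate comes from a nonzero even entry of x. If all even entries
  vanish, positive semidefiniteness puts every S^k z in the kernel of H, and the odd entries force
  lambda = 0. The negative semidefinite case follows by replacing h with -h.
\<close>

section \<open>Quadratic forms and the smallest eigenvalue\<close>

definition bilinear_form ::
  "nat \<Rightarrow> (nat \<Rightarrow> nat \<Rightarrow> real) \<Rightarrow> (nat \<Rightarrow> real) \<Rightarrow> (nat \<Rightarrow> real) \<Rightarrow> real" where
  "bilinear_form N A u v = (\<Sum>i\<le>N. \<Sum>j\<le>N. u i * A i j * v j)"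

abbreviation quad_form :: "nat \<Rightarrow> (nat \<Rightarrow> nat \<Rightarrow> real) \<Rightarrow> (nat \<Rightarrow> real) \<Rightarrow> real" where
  "quad_form N A v \<equiv> bilinear_form N A v v"

definition sq_norm :: "nat \<Rightarrow> (nat \<Rightarrow> real) \<Rightarrow> real" where
  "sq_norm N v = (\<Sum>i\<le>N. (v i)\<^sup>2)"

lemma mat_psd_iff_quad_form: "mat_psd N A \<longleftrightarrow> (\<forall>v. 0 \<le> quad_form N A v)"
  by (simp add: mat_psd_def bilinear_form_def)

lemma sq_norm_nonneg: "0 \<le> sq_norm N v"
  by (simp add: sq_norm_def sum_nonneg)

lemma sq_norm_ge_component: "i \<le> N \<Longrightarrow> (v i)\<^sup>2 \<le> sq_norm N v"
  unfolding sq_norm_def by (rule member_le_sum) auto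

lemma sq_norm_pos_iff: "0 < sq_norm N v \<longleftrightarrow> (\<exists>i\<le>N. v i \<noteq> 0)"
  using sq_norm_nonneg[of N v] by (auto simp: sq_norm_def less_le sum_nonneg_eq_0_iff)

lemma sq_norm_eq_0_imp_quad_form_eq_0:
  assumes "sq_norm N v = 0" shows "quad_form N A v = 0"
  using assms sq_norm_pos_iff[of N v] by (simp add: bilinear_form_def)

lemma quad_form_scale: "quad_form N A (\<lambda>i. c * v i) = c\<^sup>2 * quad_form N A v"
  by (simp add: bilinear_form_def sum_distrib_left power2_eq_square mult_ac)

lemma sq_norm_scale: "sq_norm N (\<lambda>i. c * v i) = c\<^sup>2 * sq_norm N v"
  by (simp add: sq_norm_def sum_distrib_left power_mult_distrib)

lemma mat_eigenvalues_finite: "finite (mat_eigenvalues N A)"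
proof -
  let ?M = "mat (Suc N) (Suc N) (\<lambda>(i,j). A i j) :: real mat"
  have M: "?M \<in> carrier_mat (Suc N) (Suc N)" by auto
  have "mat_eigenvalues N A \<subseteq> {k. poly (char_poly ?M) k = 0}"
  proof
    fix \<mu> assume "\<mu> \<in> mat_eigenvalues N A"
    then obtain v where v: "\<exists>i\<le>N. v i \<noteq> 0" "\<forall>i\<le>N. (\<Sum>j\<le>N. A i j * v j) = \<mu> * v i"
      by (auto simp: mat_eigenvalues_def)
    let ?v = "vec (Suc N) v"
    have "eigenvector ?M ?v \<mu>" unfolding eigenvector_def
    proof (intro conjI)
      show "?v \<in> carrier_vec (dim_row ?M)" by auto
      from v(1) show "?v \<noteq> 0\<^sub>v (dim_row ?M)"
        by (metis dim_row_mat(1) index_vec index_zero_vec(1) le_imp_less_Suc)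
      show "?M *\<^sub>v ?v = \<mu> \<cdot>\<^sub>v ?v"
      proof (rule eq_vecI)
        fix i assume i: "i < dim_vec (\<mu> \<cdot>\<^sub>v ?v)"
        then have "(?M *\<^sub>v ?v) $ i = (\<Sum>j<Suc N. A i j * v j)"
          by (simp add: scalar_prod_def row_def atLeast0LessThan)
        also have "\<dots> = \<mu> * v i" using v(2) i by (simp add: lessThan_Suc_atMost)
        finally show "(?M *\<^sub>v ?v) $ i = (\<mu> \<cdot>\<^sub>v ?v) $ i" using i by simp
      qed simp
    qed
    then show "\<mu> \<in> {k. poly (char_poly ?M) k = 0}"
      using eigenvalue_root_char_poly[OF M] unfolding eigenvalue_def by blast
  qed
  moreover have "char_poly ?M \<noteq> 0"
    using degree_monic_char_poly[OF M] by (metis coeff_0 zero_neq_one)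
  ultimately show ?thesis using poly_roots_finite finite_subset by blast
qed

lemma mat_eigenvalue_quad_form:
  assumes "\<mu> \<in> mat_eigenvalues N A"
  obtains v where "0 < sq_norm N v" "quad_form N A v = \<mu> * sq_norm N v"
proof -
  obtain v where v: "\<exists>i\<le>N. v i \<noteq> 0" "\<forall>i\<le>N. (\<Sum>j\<le>N. A i j * v j) = \<mu> * v i"
    using assms unfolding mat_eigenvalues_def by blast
  have "quad_form N A v = (\<Sum>i\<le>N. v i * (\<Sum>j\<le>N. A i j * v j))"
    by (simp add: bilinear_form_def sum_distrib_left mult.assoc)
  also have "\<dots> = \<mu> * sq_norm N v"
    using v(2) by (simp add: sq_norm_def sum_distrib_left power2_eq_square mult_ac)
  finally show ?thesis using that v(1) sq_norm_pos_iff by blast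
qed

lemma nonneg_quadratic_linear_coeff_eq_0:
  fixes b q :: real
  assumes "\<And>t. 0 \<le> 2 * t * b + t\<^sup>2 * q"
  shows "b = 0"
proof -
  have q: "0 \<le> q" using assms[of 1] assms[of "-1"] by simp
  then have "2 * (- b / (q + 1)) * b + (- b / (q + 1))\<^sup>2 * q = - b\<^sup>2 * (q + 2) / (q + 1)\<^sup>2"
    by (simp add: divide_simps power2_eq_square) (simp add: algebra_simps)
  then have "0 \<le> - b\<^sup>2 * (q + 2)"
    using assms[of "- b / (q + 1)"] q by (simp add: divide_le_0_iff)
  then have "b\<^sup>2 * (q + 2) \<le> 0" by simp
  then show ?thesis using q by (simp add: mult_le_0_iff)
qed

lemma bilinear_form_swap:
  assumes "\<And>i j. A i j = A j i"
  shows "bilinear_form N A u v = bilinear_form N A v u"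
  unfolding bilinear_form_def
  by (subst sum.swap) (simp add: assms mult.commute mult.left_commute)

lemma quad_form_add_scaled:
  assumes "\<And>i j. A i j = A j i"
  shows "quad_form N A (\<lambda>i. v i + t * w i)
       = quad_form N A v + 2 * t * bilinear_form N A w v + t\<^sup>2 * quad_form N A w"
proof -
  have "quad_form N A (\<lambda>i. v i + t * w i)
      = quad_form N A v + t * bilinear_form N A v w + t * bilinear_form N A w v + t\<^sup>2 * quad_form N A w"
    unfolding bilinear_form_def
    by (simp add: algebra_simps sum.distrib sum_distrib_left power2_eq_square)
  then show ?thesis using bilinear_form_swap[of A N v w, OF assms] by simp
qed

lemma psd_bilinear_form_eq_0:
  assumes sym: "\<And>i j. A i j = A j i" and psd: "\<And>u. 0 \<le> quad_form N A u"
    and "quad_form N A v = 0"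
  shows "bilinear_form N A w v = 0"
proof (rule nonneg_quadratic_linear_coeff_eq_0[where q = "quad_form N A w"])
  fix t :: real
  show "0 \<le> 2 * t * bilinear_form N A w v + t\<^sup>2 * quad_form N A w"
    using psd[of "\<lambda>i. v i + t * w i"] quad_form_add_scaled[of A N v t w, OF sym] assms(3) by simp
qed

lemma bilinear_form_unit_left:
  assumes "i \<le> N"
  shows "bilinear_form N A (\<lambda>k. if k = i then 1 else 0) v = (\<Sum>j\<le>N. A i j * v j)"
proof -
  have "bilinear_form N A (\<lambda>k. if k = i then 1 else 0) v
      = (\<Sum>k\<le>N. if k = i then (\<Sum>j\<le>N. A i j * v j) else 0)"
    unfolding bilinear_form_def by (rule sum.cong) auto
  then show ?thesis using assms by simp
qed

lemma quad_form_diag_shift: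
  "quad_form N (\<lambda>i j. A i j - (if i = j then \<mu> else 0)) w = quad_form N A w - \<mu> * sq_norm N w"
proof -
  have "(\<Sum>j\<le>N. w i * (if i = j then \<mu> else 0) * w j) = \<mu> * (w i)\<^sup>2" if "i \<le> N" for i
  proof -
    have "(\<Sum>j\<le>N. w i * (if i = j then \<mu> else 0) * w j)
        = (\<Sum>j\<le>N. if j = i then \<mu> * (w i)\<^sup>2 else 0)"
      by (rule sum.cong) (auto simp: power2_eq_square)
    then show ?thesis using that by simp
  qed
  then show ?thesis
    by (simp add: bilinear_form_def sq_norm_def algebra_simps sum_subtractf sum_distrib_left)
qed

lemma quad_form_restrict: "quad_form N A (\<lambda>i. if i \<le> N then v i else 0) = quad_form N A v"
  by (simp add: bilinear_form_def)

lemma sq_norm_restrict: "sq_norm N (\<lambda>i. if i \<le> N then v i else 0) = sq_norm N v"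
  by (simp add: sq_norm_def)

lemma quad_form_min_on_unit_sphere:
  obtains v where "sq_norm N v = 1" "\<And>u. sq_norm N u = 1 \<Longrightarrow> quad_form N A v \<le> quad_form N A u"
proof -
  define S where "S i = (if i \<le> N then {-1..1::real} else {0})" for i
  define K where "K = PiE UNIV S \<inter> {v. sq_norm N v = 1}"
  have "compactin (product_topology (\<lambda>i. euclidean) UNIV) (PiE UNIV S)"
    by (subst compactin_PiE) (auto simp: S_def)
  then have "compact (PiE UNIV S)" by (simp add: euclidean_product_topology)
  moreover have "continuous_on UNIV (sq_norm N)"
    unfolding sq_norm_def by (intro continuous_intros continuous_on_product_coordinates)
  then have "closed {v. sq_norm N v = 1}" by (rule closed_Collect_eq) auto
  ultimately have "compact K" unfolding K_def by blast
  define e :: "nat \<Rightarrow> real" where "e i = (if i = 0 then 1 else 0)" for i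
  have "sq_norm N e = (\<Sum>i\<le>N. if i = 0 then 1 else 0)"
    unfolding sq_norm_def e_def by (rule sum.cong) auto
  then have "e \<in> K" by (simp add: K_def S_def e_def PiE_UNIV_domain)
  then have "K \<noteq> {}" by blast
  moreover have "continuous_on UNIV (quad_form N A)"
    unfolding bilinear_form_def by (intro continuous_intros continuous_on_product_coordinates)
  then have "continuous_on K (quad_form N A)" by (rule continuous_on_subset) simp
  ultimately obtain v where v: "v \<in> K" "\<And>u. u \<in> K \<Longrightarrow> quad_form N A v \<le> quad_form N A u"
    using continuous_attains_inf[OF \<open>compact K\<close>] by blast
  show ?thesis
  proof (rule that)
    show "sq_norm N v = 1" using v(1) by (simp add: K_def)
    fix u assume u: "sq_norm N u = 1"
    let ?u = "\<lambda>i. if i \<le> N then u i else 0"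
    have "\<bar>u i\<bar> \<le> 1" if "i \<le> N" for i
      using sq_norm_ge_component[OF that, of u] u by (simp add: abs_square_le_1)
    then have "?u \<in> PiE UNIV S"
      unfolding PiE_UNIV_domain by (intro Pi_I) (simp add: S_def abs_le_iff)
    then have "?u \<in> K" using u by (simp add: K_def sq_norm_restrict)
    then show "quad_form N A v \<le> quad_form N A u" using v(2) quad_form_restrict by metis
  qed
qed

lemma quad_form_ge_on_unit_sphere_imp:
  assumes "\<And>v. sq_norm N v = 1 \<Longrightarrow> \<mu> \<le> quad_form N A v"
  shows "\<mu> * sq_norm N u \<le> quad_form N A u"
proof (cases "sq_norm N u = 0")
  case True
  then show ?thesis using sq_norm_eq_0_imp_quad_form_eq_0 by simp
next
  case False
  define s where "s = sqrt (sq_norm N u)"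
  have s: "0 < s" "s\<^sup>2 = sq_norm N u" using False sq_norm_nonneg[of N u] by (auto simp: s_def)
  have "sq_norm N (\<lambda>i. (1 / s) * u i) = 1"
    unfolding sq_norm_scale s(2)[symmetric] using s False by (simp add: power_divide)
  then have "\<mu> \<le> (1 / s)\<^sup>2 * quad_form N A u" using assms quad_form_scale by metis
  then show ?thesis
    using s False sq_norm_nonneg[of N u] by (simp add: power_divide pos_le_divide_eq)
qed

text \<open>Subtracting the minimum of the Rayleigh quotient from the diagonal leaves a positive semidefinite
  form vanishing at the minimiser, which therefore lies in its kernel.\<close>

lemma rayleigh_min_eigenvalue:
  assumes sym: "\<And>i j. A i j = A j i"
  obtains v where "quad_form N A v \<in> mat_eigenvalues N A"
    "\<And>u. quad_form N A v * sq_norm N u \<le> quad_form N A u"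
proof -
  obtain v where v: "sq_norm N v = 1" "\<And>u. sq_norm N u = 1 \<Longrightarrow> quad_form N A v \<le> quad_form N A u"
    using quad_form_min_on_unit_sphere by blast
  define \<mu> where "\<mu> = quad_form N A v"
  have bound: "\<mu> * sq_norm N u \<le> quad_form N A u" for u
    by (rule quad_form_ge_on_unit_sphere_imp) (use v(2) \<mu>_def in blast)
  define B where "B i j = A i j - (if i = j then \<mu> else 0)" for i j
  have quad_B: "quad_form N B w = quad_form N A w - \<mu> * sq_norm N w" for w
    unfolding B_def by (rule quad_form_diag_shift)
  have eig: "(\<Sum>j\<le>N. A i j * v j) = \<mu> * v i" if "i \<le> N" for i
  proof -
    have "0 = bilinear_form N B (\<lambda>k. if k = i then 1 else 0) v"
      by (rule psd_bilinear_form_eq_0[symmetric])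
        (use sym bound quad_B v(1) \<mu>_def in \<open>simp_all add: B_def\<close>)
    also have "\<dots> = (\<Sum>j\<le>N. A i j * v j - (if j = i then \<mu> * v i else 0))"
      using that by (auto simp: bilinear_form_unit_left B_def algebra_simps intro!: sum.cong)
    also have "\<dots> = (\<Sum>j\<le>N. A i j * v j) - \<mu> * v i" using that by (simp add: sum_subtractf)
    finally show ?thesis by simp
  qed
  have "\<exists>i\<le>N. v i \<noteq> 0" using v(1) sq_norm_pos_iff[of N v] by simp
  then have "\<mu> \<in> mat_eigenvalues N A" using eig by (auto simp: mat_eigenvalues_def)
  then show ?thesis using that bound \<mu>_def by blast
qed

lemma lambda_min_in_mat_eigenvalues:
  assumes "\<And>i j. A i j = A j i"
  shows "lambda_min N A \<in> mat_eigenvalues N A"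
proof -
  obtain v where "quad_form N A v \<in> mat_eigenvalues N A"
    using rayleigh_min_eigenvalue[of A N, OF assms] .
  then show ?thesis unfolding lambda_min_def using mat_eigenvalues_finite Min_in by blast
qed

lemma lambda_min_le_quad_form:
  assumes "\<And>i j. A i j = A j i"
  shows "lambda_min N A * sq_norm N u \<le> quad_form N A u"
proof -
  obtain v where v: "quad_form N A v \<in> mat_eigenvalues N A"
    "\<And>u. quad_form N A v * sq_norm N u \<le> quad_form N A u"
    using rayleigh_min_eigenvalue[of A N, OF assms] by blast
  have "lambda_min N A \<le> quad_form N A v"
    unfolding lambda_min_def using mat_eigenvalues_finite v(1) by simp
  then have "lambda_min N A * sq_norm N u \<le> quad_form N A v * sq_norm N u"
    by (simp add: mult_right_mono sq_norm_nonneg)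
  then show ?thesis using v(2)[of u] by linarith
qed

lemma psd_lambda_min_nonneg:
  assumes "\<And>i j. A i j = A j i" and "mat_psd N A"
  shows "0 \<le> lambda_min N A"
proof -
  obtain v where "0 < sq_norm N v" "quad_form N A v = lambda_min N A * sq_norm N v"
    using mat_eigenvalue_quad_form[OF lambda_min_in_mat_eigenvalues[of A N, OF assms(1)]] by blast
  with assms(2) show ?thesis by (metis mat_psd_iff_quad_form zero_le_mult_iff not_less)
qed

lemma mat_eigenvalues_uminus: "mat_eigenvalues N (\<lambda>i j. - A i j) = uminus ` mat_eigenvalues N A"
proof -
  have "(\<Sum>j\<le>N. - A i j * v j) = \<mu> * v i \<longleftrightarrow> (\<Sum>j\<le>N. A i j * v j) = - \<mu> * v i" for \<mu> v i
    by (auto simp: sum_negf)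
  then have "\<mu> \<in> mat_eigenvalues N (\<lambda>i j. - A i j) \<longleftrightarrow> - \<mu> \<in> mat_eigenvalues N A" for \<mu>
    by (simp add: mat_eigenvalues_def)
  moreover have "\<mu> \<in> uminus ` mat_eigenvalues N A \<longleftrightarrow> - \<mu> \<in> mat_eigenvalues N A" for \<mu>
    by (auto intro: image_eqI[of \<mu> uminus "- \<mu>"])
  ultimately show ?thesis by blast
qed

lemma lambda_max_eq_uminus_lambda_min:
  assumes "\<And>i j. A i j = A j i"
  shows "lambda_max N A = - lambda_min N (\<lambda>i j. - A i j)"
proof -
  let ?S = "mat_eigenvalues N A"
  have "?S \<noteq> {}" using lambda_min_in_mat_eigenvalues[of A N, OF assms] by blast
  then have "Min (uminus ` ?S) = - Max ?S"
    using mat_eigenvalues_finite by (simp add: minus_Max_eq_Min)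
  then show ?thesis by (simp add: lambda_min_def lambda_max_def mat_eigenvalues_uminus)
qed

section \<open>Self-convolution\<close>

lemma conv_pow_Suc: "conv_pow y (Suc p) = conv y (conv_pow y p)"
proof (cases p)
  case 0
  have "conv y (conv_pow y 0) j = y j" for j
  proof -
    have "conv y (conv_pow y 0) j = (\<Sum>i\<le>j. if i = j then y i else 0)"
      unfolding conv_def by (rule sum.cong) auto
    then show ?thesis by simp
  qed
  then show ?thesis using 0 by auto
qed simp

lemma conv_pow_eq_0:
  assumes "\<And>i. K < i \<Longrightarrow> x i = 0" and "p * K < k"
  shows "conv_pow x p k = 0"
  using assms(2)
proof (induction p arbitrary: k)
  case (Suc p)
  have "x i * conv_pow x p (k - i) = 0" if "i \<le> k" for i
    using assms(1)[of i] Suc.IH[of "k - i"] Suc.prems that by (cases "K < i") auto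
  then show ?case unfolding conv_pow_Suc conv_def by (intro sum.neutral) auto
qed simp

lemma sum_mult_conv:
  assumes u: "\<And>i. Ka < i \<Longrightarrow> u i = 0" and v: "\<And>i. Kb < i \<Longrightarrow> v i = 0"
  shows "(\<Sum>k\<le>Ka+Kb. g k * conv u v k) = (\<Sum>a\<le>Ka. u a * (\<Sum>b\<le>Kb. g (a+b) * v b))"
proof -
  have "(\<Sum>k\<le>Ka+Kb. g k * conv u v k) = (\<Sum>k\<le>Ka+Kb. \<Sum>i\<le>k. g (i + (k - i)) * u i * v (k - i))"
    unfolding conv_def by (simp add: sum_distrib_left mult.assoc)
  also have "\<dots> = (\<Sum>(i,j)\<in>{(i,j). i+j \<le> Ka+Kb}. g (i+j) * u i * v j)"
    by (rule sum.triangle_reindex_eq[symmetric])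
  also have "\<dots> = (\<Sum>(i,j)\<in>{..Ka}\<times>{..Kb}. g (i+j) * u i * v j)"
  proof (rule sum.mono_neutral_right)
    show "finite {(i,j). i+j \<le> Ka+Kb}"
      by (rule finite_subset[of _ "{..Ka+Kb}\<times>{..Ka+Kb}"]) auto
    show "\<forall>p\<in>{(i,j). i+j \<le> Ka+Kb} - {..Ka}\<times>{..Kb}. (\<lambda>(i,j). g (i+j) * u i * v j) p = 0"
      using u v by (force simp: not_le[symmetric])
  qed auto
  also have "\<dots> = (\<Sum>a\<le>Ka. u a * (\<Sum>b\<le>Kb. g (a+b) * v b))"
    by (subst sum.cartesian_product[symmetric]) (simp add: sum_distrib_left mult_ac)
  finally show ?thesis .
qed

lemma sum_mult_conv_pow_add:
  assumes x: "\<And>i. K < i \<Longrightarrow> x i = 0"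
  shows "(\<Sum>k\<le>(p+q)*K. g k * conv_pow x (p+q) k)
       = (\<Sum>a\<le>p*K. conv_pow x p a * (\<Sum>b\<le>q*K. g (a+b) * conv_pow x q b))"
proof (induction p arbitrary: g)
  case (Suc p)
  have supp: "\<And>i. r * K < i \<Longrightarrow> conv_pow x r i = 0" for r by (rule conv_pow_eq_0[OF x])
  have "(\<Sum>k\<le>(Suc p+q)*K. g k * conv_pow x (Suc p+q) k)
      = (\<Sum>k\<le>K + (p+q)*K. g k * conv x (conv_pow x (p+q)) k)"
    by (simp add: conv_pow_Suc add.assoc)
  also have "\<dots> = (\<Sum>a\<le>K. x a * (\<Sum>c\<le>(p+q)*K. g (a+c) * conv_pow x (p+q) c))"
    by (rule sum_mult_conv[OF x supp])
  also have "\<dots> = (\<Sum>a\<le>K. x a * (\<Sum>c\<le>p*K. (\<Sum>d\<le>q*K. g (a+c+d) * conv_pow x q d) * conv_pow x p c))"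
    using Suc.IH by (simp add: add.assoc mult.commute)
  also have "\<dots> = (\<Sum>e\<le>K + p*K. (\<Sum>d\<le>q*K. g (e+d) * conv_pow x q d) * conv x (conv_pow x p) e)"
    by (rule sum_mult_conv[OF x supp, symmetric])
  also have "\<dots> = (\<Sum>a\<le>Suc p*K. conv_pow x (Suc p) a * (\<Sum>b\<le>q*K. g (a+b) * conv_pow x q b))"
    by (simp add: conv_pow_Suc mult.commute)
  finally show ?case .
qed simp

lemma sum_PiE_prod_eq_sum_conv_pow:
  assumes x: "\<And>i. K < i \<Longrightarrow> x i = 0"
  shows "(\<Sum>f\<in>Pi\<^sub>E {..<p} (\<lambda>_. {..K}). g (\<Sum>j<p. f j) * (\<Prod>j<p. x (f j)))
       = (\<Sum>k\<le>p*K. g k * conv_pow x p k)"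
proof (induction p arbitrary: g)
  case (Suc p)
  let ?F = "Pi\<^sub>E {..<p} (\<lambda>_. {..K})"
  have PiE_Suc: "Pi\<^sub>E {..<Suc p} (\<lambda>_. {..K}) = (\<lambda>(a, f). f(p := a)) ` ({..K} \<times> ?F)"
    unfolding lessThan_Suc by (rule PiE_insert_eq)
  have inj: "inj_on (\<lambda>(a, f). f(p := a)) ({..K} \<times> ?F)"
    by (rule inj_combinator) auto
  have upd: "(\<Sum>j<p. (f(p := a)) j) = (\<Sum>j<p. f j)" "(\<Prod>j<p. x ((f(p := a)) j)) = (\<Prod>j<p. x (f j))"
    for a f by (auto intro: sum.cong prod.cong)
  have "(\<Sum>f\<in>Pi\<^sub>E {..<Suc p} (\<lambda>_. {..K}). g (\<Sum>j<Suc p. f j) * (\<Prod>j<Suc p. x (f j)))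
      = (\<Sum>(a,f)\<in>{..K} \<times> ?F. x a * (g (a + (\<Sum>j<p. f j)) * (\<Prod>j<p. x (f j))))"
    unfolding PiE_Suc by (subst sum.reindex[OF inj]) (simp add: case_prod_beta upd add.commute mult_ac)
  also have "\<dots> = (\<Sum>a\<le>K. x a * (\<Sum>f\<in>?F. g (a + (\<Sum>j<p. f j)) * (\<Prod>j<p. x (f j))))"
    by (simp add: sum.cartesian_product[symmetric] sum_distrib_left)
  also have "\<dots> = (\<Sum>a\<le>K. x a * (\<Sum>k\<le>p*K. g (a + k) * conv_pow x p k))"
  proof (intro sum.cong refl)
    fix a show "x a * (\<Sum>f\<in>?F. g (a + (\<Sum>j<p. f j)) * (\<Prod>j<p. x (f j)))
      = x a * (\<Sum>k\<le>p*K. g (a + k) * conv_pow x p k)"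
      using Suc.IH[of "\<lambda>s. g (a + s)"] by simp
  qed
  also have "\<dots> = (\<Sum>k\<le>K + p*K. g k * conv x (conv_pow x p) k)"
    by (rule sum_mult_conv[symmetric]) (auto intro: x conv_pow_eq_0[OF x])
  finally show ?case by (simp add: conv_pow_Suc)
qed simp

lemma vec_n_eq_0: "y \<in> vec_n n \<Longrightarrow> n - 1 < i \<Longrightarrow> 1 \<le> n \<Longrightarrow> y i = 0"
  by (simp add: vec_n_def)

lemma hankel_tensor_apply_eq_sum_conv_pow:
  assumes "y \<in> vec_n n" and "1 \<le> n"
  shows "hankel_tensor_apply m n h y i = (\<Sum>k\<le>(m-1)*(n-1). h (i + k) * conv_pow y (m-1) k)"
proof -
  have "{..<n} = {..n-1}" using assms(2) by auto
  moreover have "n - 1 < j \<Longrightarrow> y j = 0" for j using vec_n_eq_0 assms by blast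
  ultimately show ?thesis
    unfolding hankel_tensor_apply_def by (simp only:) (rule sum_PiE_prod_eq_sum_conv_pow)
qed

lemma hankel_tensor_apply_restrict:
  "hankel_tensor_apply m n h (\<lambda>j. if j < n then x j else 0) i = hankel_tensor_apply m n h x i"
  unfolding hankel_tensor_apply_def
  by (intro sum.cong refl arg_cong2[where f="(*)"] prod.cong) (auto simp: PiE_iff)

section \<open>Hankel tensors and Hankel forms\<close>

lemma hankel_matrix_sym: "hankel_matrix h i j = hankel_matrix h j i"
  by (simp add: hankel_matrix_def add.commute)

definition shift :: "nat \<Rightarrow> (nat \<Rightarrow> real) \<Rightarrow> nat \<Rightarrow> real" where
  "shift k z a = (if k \<le> a then z (a - k) else 0)"

lemma shift_0 [simp]: "shift 0 z = z"
  by (rule ext) (simp add: shift_def)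

lemma sum_shift_mult:
  assumes z: "\<And>i. M < i \<Longrightarrow> z i = 0" and "M + k \<le> N"
  shows "(\<Sum>a\<le>N. shift k z a * \<phi> a) = (\<Sum>a\<le>M. z a * \<phi> (a + k))"
proof -
  have "(\<Sum>a\<le>N. shift k z a * \<phi> a) = (\<Sum>a\<in>{k..N}. shift k z a * \<phi> a)"
    by (rule sum.mono_neutral_right) (auto simp: shift_def)
  also have "\<dots> = (\<Sum>a\<in>{0+k..(N-k)+k}. shift k z a * \<phi> a)"
    using assms(2) by simp
  also have "\<dots> = (\<Sum>a\<in>{0..N-k}. z a * \<phi> (a + k))"
    by (subst sum.shift_bounds_cl_nat_ivl) (simp add: shift_def)
  also have "\<dots> = (\<Sum>a\<le>M. z a * \<phi> (a + k))"
    by (rule sum.mono_neutral_right) (use assms in auto)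
  finally show ?thesis .
qed

lemma sq_norm_shift:
  assumes "\<And>i. M < i \<Longrightarrow> z i = 0" and "M + k \<le> N"
  shows "sq_norm N (shift k z) = sq_norm M z"
  using sum_shift_mult[OF assms, where \<phi> = "shift k z"]
  by (simp add: sq_norm_def power2_eq_square shift_def)

lemma bilinear_form_hankel_shift:
  assumes z: "\<And>i. M < i \<Longrightarrow> z i = 0" and "M + k1 \<le> N" and "M + k2 \<le> N"
  shows "bilinear_form N (hankel_matrix h) (shift k1 z) (shift k2 z)
       = (\<Sum>a\<le>M. \<Sum>b\<le>M. z a * h (k1 + k2 + a + b) * z b)"
proof -
  have "bilinear_form N (hankel_matrix h) (shift k1 z) (shift k2 z)
      = (\<Sum>a\<le>N. shift k1 z a * (\<Sum>b\<le>N. shift k2 z b * h (a + b)))"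
    by (simp add: bilinear_form_def hankel_matrix_def sum_distrib_left mult_ac)
  also have "\<dots> = (\<Sum>a\<le>N. shift k1 z a * (\<Sum>b\<le>M. z b * h (a + (b + k2))))"
    using sum_shift_mult[OF z assms(3)] by simp
  also have "\<dots> = (\<Sum>a\<le>M. z a * (\<Sum>b\<le>M. z b * h ((a + k1) + (b + k2))))"
    by (rule sum_shift_mult[OF z assms(2)])
  finally show ?thesis by (simp add: sum_distrib_left mult_ac add_ac)
qed

lemma sum_hankel_conv_pow_double:
  assumes "\<And>i. K < i \<Longrightarrow> x i = 0"
  shows "(\<Sum>k\<le>(p+p)*K. h (c + k) * conv_pow x (p+p) k)
       = (\<Sum>a\<le>p*K. \<Sum>b\<le>p*K. conv_pow x p a * h (c + a + b) * conv_pow x p b)"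
  by (subst sum_mult_conv_pow_add[OF assms]) (auto simp: sum_distrib_left mult_ac add_ac intro!: sum.cong)

lemma sum_mult_hankel_tensor_apply_even:
  assumes "1 \<le> p" and x: "x \<in> vec_n n" and "1 \<le> n"
  shows "(\<Sum>i<n. x i * hankel_tensor_apply (2*p) n h x i)
       = quad_form (p*(n-1)) (hankel_matrix h) (conv_pow x p)"
proof -
  let ?K = "n - 1"
  have supp: "\<And>i. ?K < i \<Longrightarrow> x i = 0" using vec_n_eq_0[OF x] assms(3) by blast
  have "{..<n} = {..1*?K}" using assms(3) by auto
  then have "(\<Sum>i<n. x i * hankel_tensor_apply (2*p) n h x i)
      = (\<Sum>a\<le>1*?K. conv_pow x 1 a * (\<Sum>b\<le>(2*p-1)*?K. h (a + b) * conv_pow x (2*p-1) b))"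
    by (simp add: hankel_tensor_apply_eq_sum_conv_pow[OF x assms(3)])
  also have "\<dots> = (\<Sum>k\<le>(1 + (2*p-1))*?K. h k * conv_pow x (1 + (2*p-1)) k)"
    by (rule sum_mult_conv_pow_add[OF supp, symmetric])
  also have "\<dots> = (\<Sum>k\<le>(p+p)*?K. h (0 + k) * conv_pow x (p+p) k)"
    using assms(1) by (simp add: mult_2)
  also have "\<dots> = (\<Sum>a\<le>p*?K. \<Sum>b\<le>p*?K. conv_pow x p a * h (0 + a + b) * conv_pow x p b)"
    by (rule sum_hankel_conv_pow_double[OF supp])
  also have "\<dots> = quad_form (p*?K) (hankel_matrix h) (conv_pow x p)"
    unfolding bilinear_form_def hankel_matrix_def by simp
  finally show ?thesis .
qed

lemma hankel_tensor_apply_odd_eq_bilinear_form: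
  assumes x: "x \<in> vec_n n" and "1 \<le> n" and "p*(n-1) + k1 \<le> N" and "p*(n-1) + k2 \<le> N"
  shows "hankel_tensor_apply (2*p+1) n h x (k1 + k2)
       = bilinear_form N (hankel_matrix h) (shift k1 (conv_pow x p)) (shift k2 (conv_pow x p))"
proof -
  let ?K = "n - 1"
  have supp: "\<And>i. ?K < i \<Longrightarrow> x i = 0" using vec_n_eq_0[OF x] assms(2) by blast
  have "hankel_tensor_apply (2*p+1) n h x (k1 + k2)
      = (\<Sum>k\<le>(p+p)*?K. h (k1 + k2 + k) * conv_pow x (p+p) k)"
    by (simp add: hankel_tensor_apply_eq_sum_conv_pow[OF x assms(2)] mult_2)
  also have "\<dots> = (\<Sum>a\<le>p*?K. \<Sum>b\<le>p*?K. conv_pow x p a * h (k1 + k2 + a + b) * conv_pow x p b)"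
    by (rule sum_hankel_conv_pow_double[OF supp])
  also have "\<dots> = bilinear_form N (hankel_matrix h) (shift k1 (conv_pow x p)) (shift k2 (conv_pow x p))"
    by (rule bilinear_form_hankel_shift[symmetric]) (use conv_pow_eq_0[OF supp] assms(3,4) in auto)
  finally show ?thesis .
qed

lemma const_c_eq_Inf:
  "const_c m n
     = Inf {conv_ratio n (m div 2) (2 * (m div 2)) y | y. y \<in> vec_n n \<and> (\<exists>i<n. y i \<noteq> 0)}"
proof (cases "even m")
  case False
  then have "m - 1 = 2 * (m div 2)" and "(m - 1) div 2 = m div 2" by presburger+
  with False show ?thesis by (simp add: const_c_def)
qed (simp add: const_c_def)

lemma sum_abs_power_pos:
  fixes y :: "nat \<Rightarrow> real"
  assumes "\<exists>i<n. y i \<noteq> 0" shows "0 < (\<Sum>i<n. \<bar>y i\<bar> ^ q)"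
proof -
  obtain i where "i < n" "y i \<noteq> 0" using assms by blast
  then show ?thesis by (intro sum_pos2[of _ i]) auto
qed

lemma const_c_nonneg_le:
  assumes "y \<in> vec_n n" and "\<exists>i<n. y i \<noteq> 0"
  shows "0 \<le> const_c m n"
    and "const_c m n * (\<Sum>i<n. \<bar>y i\<bar> ^ (2 * (m div 2)))
           \<le> sq_norm ((m div 2) * (n - 1)) (conv_pow y (m div 2))" (is "_ * ?D \<le> ?S")
proof -
  let ?C = "{conv_ratio n (m div 2) (2 * (m div 2)) y | y. y \<in> vec_n n \<and> (\<exists>i<n. y i \<noteq> 0)}"
  have C_nonneg: "0 \<le> r" if "r \<in> ?C" for r
    using that by (auto simp: conv_ratio_def sum_nonneg)
  have C_bdd: "bdd_below ?C" by (rule bdd_belowI[of _ 0]) (rule C_nonneg)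
  have y: "conv_ratio n (m div 2) (2 * (m div 2)) y \<in> ?C" using assms by blast
  show "0 \<le> const_c m n"
    unfolding const_c_eq_Inf by (rule cInf_greatest) (use y C_nonneg in auto)
  have "0 < ?D" using assms(2) by (rule sum_abs_power_pos)
  moreover have "const_c m n \<le> conv_ratio n (m div 2) (2 * (m div 2)) y"
    unfolding const_c_eq_Inf by (rule cInf_lower[OF y C_bdd])
  ultimately show "const_c m n * ?D \<le> ?S"
    by (simp add: conv_ratio_def sq_norm_def pos_le_divide_eq)
qed

lemma const_c_lambda_min_le_quad_form_shift:
  assumes psd: "mat_psd N (hankel_matrix h)" and x: "x \<in> vec_n n" "\<exists>i<n. x i \<noteq> 0"
    and "1 \<le> n" and "(m div 2) * (n - 1) + k \<le> N"
  shows "const_c m n * lambda_min N (hankel_matrix h) * (\<Sum>i<n. \<bar>x i\<bar> ^ (2 * (m div 2)))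
       \<le> quad_form N (hankel_matrix h) (shift k (conv_pow x (m div 2)))"
proof -
  let ?p = "m div 2" and ?H = "hankel_matrix h"
  let ?z = "conv_pow x ?p" and ?lm = "lambda_min N ?H"
  have supp: "\<And>i. ?p * (n - 1) < i \<Longrightarrow> ?z i = 0"
    by (rule conv_pow_eq_0) (use vec_n_eq_0[OF x(1)] \<open>1 \<le> n\<close> in auto)
  have "0 \<le> ?lm" by (rule psd_lambda_min_nonneg[of ?H, OF hankel_matrix_sym psd])
  have "const_c m n * ?lm * (\<Sum>i<n. \<bar>x i\<bar> ^ (2 * ?p))
      = ?lm * (const_c m n * (\<Sum>i<n. \<bar>x i\<bar> ^ (2 * ?p)))" by (simp add: mult_ac)
  also have "\<dots> \<le> ?lm * sq_norm (?p * (n - 1)) ?z"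
    by (rule mult_left_mono[OF const_c_nonneg_le(2)[OF x] \<open>0 \<le> ?lm\<close>])
  also have "\<dots> = ?lm * sq_norm N (shift k ?z)"
    using sq_norm_shift[OF supp assms(5)] by simp
  also have "\<dots> \<le> quad_form N ?H (shift k ?z)"
    by (rule lambda_min_le_quad_form[of ?H, OF hankel_matrix_sym])
  finally show ?thesis .
qed

lemma H_eigenvalue_lower_bound_even:
  assumes "1 \<le> p" and "1 \<le> n" and psd: "mat_psd (p * (n - 1)) (hankel_matrix h)"
    and x: "x \<in> vec_n n" "\<exists>i<n. x i \<noteq> 0"
    and eig: "\<And>i. i < n \<Longrightarrow> hankel_tensor_apply (2*p) n h x i = lam * x i ^ (2*p - 1)"
  shows "const_c (2*p) n * lambda_min (p * (n - 1)) (hankel_matrix h) \<le> lam"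
proof -
  define D where "D = (\<Sum>i<n. \<bar>x i\<bar> ^ (2*p))"
  have "x i * hankel_tensor_apply (2*p) n h x i = lam * \<bar>x i\<bar> ^ (2*p)" if "i < n" for i
  proof -
    have "x i * x i ^ (2*p - 1) = x i ^ (2*p)"
      using \<open>1 \<le> p\<close> by (simp add: power_eq_if[of "x i" "2*p"])
    then show ?thesis using eig[OF that] by (simp add: power_even_abs)
  qed
  then have "lam * D = (\<Sum>i<n. x i * hankel_tensor_apply (2*p) n h x i)"
    by (simp add: D_def sum_distrib_left)
  also have "\<dots> = quad_form (p * (n - 1)) (hankel_matrix h) (conv_pow x p)"
    by (rule sum_mult_hankel_tensor_apply_even[OF \<open>1 \<le> p\<close> x(1) \<open>1 \<le> n\<close>])
  finally have "lam * D = quad_form (p * (n - 1)) (hankel_matrix h) (conv_pow x p)" .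
  moreover have "const_c (2*p) n * lambda_min (p * (n - 1)) (hankel_matrix h) * D
      \<le> quad_form (p * (n - 1)) (hankel_matrix h) (conv_pow x p)"
    using const_c_lambda_min_le_quad_form_shift[OF psd x \<open>1 \<le> n\<close>, of "2*p" 0] by (simp add: D_def)
  ultimately have "const_c (2*p) n * lambda_min (p * (n - 1)) (hankel_matrix h) * D \<le> lam * D"
    by simp
  moreover have "0 < D" unfolding D_def using x(2) by (rule sum_abs_power_pos)
  ultimately show ?thesis by simp
qed

lemma H_eigenvalue_odd_eq_0_if_even_entries_vanish:
  assumes "1 \<le> p" and n: "n = 2*r + 1" and psd: "mat_psd (p * (n - 1) + r) (hankel_matrix h)"
    and x: "x \<in> vec_n n" "\<exists>i<n. x i \<noteq> 0" and even_0: "\<forall>k\<le>r. x (k + k) = 0"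
    and eig: "\<And>i. i < n \<Longrightarrow> hankel_tensor_apply (2*p + 1) n h x i = lam * x i ^ (2*p)"
  shows "lam = 0"
proof -
  define N where "N = p * (n - 1) + r"
  let ?H = "hankel_matrix h" and ?z = "conv_pow x p"
  have apply_shift: "hankel_tensor_apply (2*p + 1) n h x (k1 + k2)
      = bilinear_form N ?H (shift k1 ?z) (shift k2 ?z)" if "k1 \<le> r" "k2 \<le> r" for k1 k2
    by (rule hankel_tensor_apply_odd_eq_bilinear_form[OF x(1)]) (use n that N_def in auto)
  obtain i where i: "i < n" "x i \<noteq> 0" using x(2) by blast
  define k where "k = i div 2"
  have "odd i"
  proof
    assume "even i"
    then have "i = k + k" "k \<le> r" using i(1) n unfolding k_def by presburger+
    with even_0 i(2) show False by blast
  qed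
  then have k: "i = (k + 1) + k" "k + 1 \<le> r" using i(1) n unfolding k_def by presburger+
  have zero: "quad_form N ?H (shift k ?z) = 0"
    using apply_shift[of k k] eig[of "k + k"] even_0 k(2) n \<open>1 \<le> p\<close> by simp
  have "bilinear_form N ?H (shift (k + 1) ?z) (shift k ?z) = 0"
    by (rule psd_bilinear_form_eq_0[of ?H, OF hankel_matrix_sym _ zero])
      (use psd N_def in \<open>simp add: mat_psd_iff_quad_form\<close>)
  then have "lam * x i ^ (2*p) = 0"
    using eig[OF i(1)] apply_shift[of "k + 1" k] k by simp
  then show ?thesis using i(2) by simp
qed

lemma H_eigenvalue_lower_bound_odd:
  assumes "1 \<le> p" and n: "n = 2*r + 1" and psd: "mat_psd (p * (n - 1) + r) (hankel_matrix h)"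
    and x: "x \<in> vec_n n" "\<exists>i<n. x i \<noteq> 0"
    and eig: "\<And>i. i < n \<Longrightarrow> hankel_tensor_apply (2*p + 1) n h x i = lam * x i ^ (2*p)"
  shows "const_c (2*p + 1) n * lambda_min (p * (n - 1) + r) (hankel_matrix h) \<le> lam"
proof -
  define N where "N = p * (n - 1) + r"
  let ?H = "hankel_matrix h" and ?z = "conv_pow x p"
  define cl where "cl = const_c (2*p + 1) n * lambda_min N ?H"
  define D where "D = (\<Sum>i<n. \<bar>x i\<bar> ^ (2*p))"
  have "0 < D" unfolding D_def using x(2) by (rule sum_abs_power_pos)
  have "0 \<le> cl" unfolding cl_def
    using const_c_nonneg_le(1)[OF x] psd_lambda_min_nonneg[of ?H, OF hankel_matrix_sym] psd N_def
    by simp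
  have quad: "quad_form N ?H (shift k ?z) = lam * x (k + k) ^ (2*p)" if "k \<le> r" for k
    using hankel_tensor_apply_odd_eq_bilinear_form[OF x(1), of p k N k h] eig[of "k + k"] that n N_def
    by simp
  have lower: "cl * D \<le> quad_form N ?H (shift k ?z)" if "k \<le> r" for k
    using const_c_lambda_min_le_quad_form_shift[OF psd[folded N_def] x, of "2*p + 1" k] that n
    by (simp add: cl_def D_def N_def)
  show ?thesis
  proof (cases "\<exists>k\<le>r. x (k + k) \<noteq> 0")
    case True
    then obtain k where k: "k \<le> r" "x (k + k) \<noteq> 0" by blast
    have "\<bar>x (k + k)\<bar> ^ (2*p) \<le> D"
      unfolding D_def by (rule member_le_sum) (use k(1) n in auto)
    then have "cl * \<bar>x (k + k)\<bar> ^ (2*p) \<le> cl * D" using \<open>0 \<le> cl\<close> by (rule mult_left_mono)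
    also have "\<dots> \<le> lam * \<bar>x (k + k)\<bar> ^ (2*p)"
      using lower[OF k(1)] quad[OF k(1)] by (simp add: power_even_abs)
    finally show ?thesis using k(2) by (simp add: cl_def N_def)
  next
    case False
    then have "lam = 0"
      using H_eigenvalue_odd_eq_0_if_even_entries_vanish[OF assms(1) n psd x _ eig] by blast
    have "x 0 = 0" using False by auto
    then have "cl * D \<le> 0" using lower[of 0] quad[of 0] \<open>1 \<le> p\<close> by (simp add: power_0_left)
    with \<open>lam = 0\<close> \<open>0 < D\<close> show ?thesis by (simp add: cl_def N_def mult_le_0_iff)
  qed
qed

lemma H_eigenvalue_ge_const_c_lambda_min:
  assumes "2 \<le> m" and "1 \<le> n" and "even (m * (n - 1))"
    and psd: "mat_psd (m * (n - 1) div 2) (hankel_matrix h)" and "is_H_eigenvalue m n h lam"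
  shows "const_c m n * lambda_min (m * (n - 1) div 2) (hankel_matrix h) \<le> lam"
proof -
  obtain x0 where x0: "\<exists>i<n. x0 i \<noteq> 0"
    "\<And>i. i < n \<Longrightarrow> hankel_tensor_apply m n h x0 i = lam * x0 i ^ (m - 1)"
    using assms(5) unfolding is_H_eigenvalue_def by blast
  define x where "x j = (if j < n then x0 j else 0)" for j
  have x: "x \<in> vec_n n" "\<exists>i<n. x i \<noteq> 0" using x0(1) by (auto simp: x_def vec_n_def)
  have eig: "hankel_tensor_apply m n h x i = lam * x i ^ (m - 1)" if "i < n" for i
    using x0(2)[OF that] hankel_tensor_apply_restrict[of m n h x0 i] that
    by (simp add: x_def[abs_def])
  define p where "p = m div 2"
  have "1 \<le> p" using assms(1) by (simp add: p_def)
  show ?thesis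
  proof (cases "even m")
    case True
    then have m: "m = 2*p" by (simp add: p_def)
    show ?thesis
      using H_eigenvalue_lower_bound_even[OF \<open>1 \<le> p\<close> \<open>1 \<le> n\<close> _ x, of h lam] psd eig
      by (simp add: m)
  next
    case False
    then have m: "m = 2*p + 1" by (simp add: p_def)
    have "even (n - 1)" using assms(3) False by simp
    then obtain r where n: "n = 2*r + 1" using assms(2) by (metis evenE le_add_diff_inverse2)
    have "m * (n - 1) div 2 = p * (n - 1) + r" by (simp add: m n algebra_simps)
    then show ?thesis
      using H_eigenvalue_lower_bound_odd[OF \<open>1 \<le> p\<close> n _ x, of h lam] psd eig
      by (simp add: m)
  qed
qed

lemma is_H_eigenvalue_uminus:
  "is_H_eigenvalue m n h lam \<Longrightarrow> is_H_eigenvalue m n (\<lambda>k. - h k) (- lam)"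
  by (simp add: is_H_eigenvalue_def hankel_tensor_apply_def sum_negf)

lemma mat_nsd_hankel_iff_psd_uminus:
  "mat_nsd N (hankel_matrix h) \<longleftrightarrow> mat_psd N (hankel_matrix (\<lambda>k. - h k))"
  by (simp add: mat_nsd_def mat_psd_def hankel_matrix_def sum_negf)

lemma lambda_max_hankel_eq_uminus_lambda_min:
  "lambda_max N (hankel_matrix h) = - lambda_min N (hankel_matrix (\<lambda>k. - h k))"
proof -
  have "hankel_matrix (\<lambda>k. - h k) = (\<lambda>i j. - hankel_matrix h i j)"
    by (simp add: hankel_matrix_def fun_eq_iff)
  then show ?thesis
    using lambda_max_eq_uminus_lambda_min[of "hankel_matrix h", OF hankel_matrix_sym] by simp
qed

theorem theorem6:
  fixes m n :: nat and h :: "nat \<Rightarrow> real"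
  assumes "m \<ge> 2" and "n \<ge> 1" and "even (m * (n - 1))"
  shows "(mat_psd (m * (n - 1) div 2) (hankel_matrix h) \<longrightarrow>
            (\<forall>lam. is_H_eigenvalue m n h lam \<longrightarrow>
               lam \<ge> const_c m n * lambda_min (m * (n - 1) div 2) (hankel_matrix h)))
       \<and> (mat_nsd (m * (n - 1) div 2) (hankel_matrix h) \<longrightarrow>
            (\<forall>lam. is_H_eigenvalue m n h lam \<longrightarrow>
               lam \<le> const_c m n * lambda_max (m * (n - 1) div 2) (hankel_matrix h)))"
proof (intro conjI impI allI)
  fix lam
  assume "mat_psd (m * (n - 1) div 2) (hankel_matrix h)" and "is_H_eigenvalue m n h lam"
  then show "lam \<ge> const_c m n * lambda_min (m * (n - 1) div 2) (hankel_matrix h)"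
    by (rule H_eigenvalue_ge_const_c_lambda_min[OF assms])
next
  fix lam
  assume "mat_nsd (m * (n - 1) div 2) (hankel_matrix h)" and "is_H_eigenvalue m n h lam"
  then have "- lam \<ge> const_c m n * lambda_min (m * (n - 1) div 2) (hankel_matrix (\<lambda>k. - h k))"
    by (intro H_eigenvalue_ge_const_c_lambda_min[OF assms])
      (simp_all add: mat_nsd_hankel_iff_psd_uminus is_H_eigenvalue_uminus)
  then show "lam \<le> const_c m n * lambda_max (m * (n - 1) div 2) (hankel_matrix h)"
    by (simp add: lambda_max_hankel_eq_uminus_lambda_min)
qed

end
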